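(* Let $R$ be a Noetherian ring and $\Gamma$ an arbitrary finitely generated group with a word metric. Every surjective $R[\Gamma]$-homomorphism $\phi\colon F\to G$ between properly generated $R[\Gamma]$-modules is boundedly bicontrolled as a homomorphism of $\Gamma$-filtered $R$-modules $s(F,\Sigma_F)\to s(G,\Sigma_G)$, for finite generating sets $\Sigma_F,\Sigma_G$ with respect to which $F$ and $G$ are lean and insular.
   Context: Notation: $S[b]$ is the metric $b$-enlargement of $S\subset\Gamma$, $x[b]$ the $b$-ball about $x$. For a finitely generated $R[\Gamma]$-module $F$ with finite generating set $\Sigma$, $s(F,\Sigma)$ is the $\Gamma$-filtered $R$-module with $F(S)=$ the $R$-submodule generated by $\{s\sigma: s\in S,\sigma\in\Sigma\}$. A $\Gamma$-filtered module is lean if $F(S)\subset\sum_{x\in S}F(x[D])$ for some $D\ge0$ and all $S$, insular if $F(S)\cap F(U)\subset F(S[d]\cap U[d])$ for some $d\ge0$ and all $S,U$. A finitely generated $R[\Gamma]$-module $F$ is properly generated if $s(F,\Sigma)$ is lean and insular for some finite generating set $\Sigma$ (the properties then hold for every finite generating set). A homomorphism $f\colon F\to F'$ of filtered modules is boundedly bicontrolled if there is $b\ge0$ such that for all $S$: $f(F(S))\subset F'(S[b])$ and $f(F)\cap F'(S)\subset f(F(S[b]))$. *)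

theory Defs
  imports Main
begin

definition left_ideal :: "'r::ring_1 set \<Rightarrow> bool" where
  "left_ideal I \<longleftrightarrow> 0 \<in> I \<and> (\<forall>x\<in>I. \<forall>y\<in>I. x + y \<in> I) \<and> (\<forall>r. \<forall>x\<in>I. r * x \<in> I)"

definition right_ideal :: "'r::ring_1 set \<Rightarrow> bool" where
  "right_ideal I \<longleftrightarrow> 0 \<in> I \<and> (\<forall>x\<in>I. \<forall>y\<in>I. x + y \<in> I) \<and> (\<forall>r. \<forall>x\<in>I. x * r \<in> I)"

definition noetherian_ring :: "'r::ring_1 itself \<Rightarrow> bool" where
  "noetherian_ring _ \<longleftrightarrow>
     (\<forall>I::'r set. left_ideal I \<longrightarrow>
        (\<exists>T. finite T \<and> T \<subseteq> I \<and> I = {x. \<exists>c. x = (\<Sum>t\<in>T. c t * t)}))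
   \<and> (\<forall>I::'r set. right_ideal I \<longrightarrow>
        (\<exists>T. finite T \<and> T \<subseteq> I \<and> I = {x. \<exists>c. x = (\<Sum>t\<in>T. t * c t)}))"

text \<open>The group \<Gamma> is a type of class group_add (not necessarily commutative),
 written additively: g + h is the group product, -g the inverse, 0 the unit.\<close>

definition generates :: "'g::group_add set \<Rightarrow> bool" where
  "generates A \<longleftrightarrow> (\<forall>g. \<exists>xs. set xs \<subseteq> A \<union> uminus ` A \<and> sum_list xs = g)"

definition word_length :: "'g::group_add set \<Rightarrow> 'g \<Rightarrow> nat" where
  "word_length A g = (LEAST n. \<exists>xs. length xs = n \<and> set xs \<subseteq> A \<union> uminus ` A \<and> sum_list xs = g)"

definition word_dist :: "'g::group_add set \<Rightarrow> 'g \<Rightarrow> 'g \<Rightarrow> nat" where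
  "word_dist A x y = word_length A (- x + y)"

definition enlarge :: "'g::group_add set \<Rightarrow> 'g set \<Rightarrow> nat \<Rightarrow> 'g set" where
  "enlarge A S b = {y. \<exists>x\<in>S. word_dist A x y \<le> b}"

definition ball_w :: "'g::group_add set \<Rightarrow> 'g \<Rightarrow> nat \<Rightarrow> 'g set" where
  "ball_w A x b = {y. word_dist A x y \<le> b}"

text \<open>A (left) R[\<Gamma>]-module on the abelian group 'm: an R-scalar multiplication
  sm and an action ac of \<Gamma> by R-linear maps.\<close>
definition rg_module ::
  "('r::ring_1 \<Rightarrow> 'm::ab_group_add \<Rightarrow> 'm) \<Rightarrow> ('g::group_add \<Rightarrow> 'm \<Rightarrow> 'm) \<Rightarrow> bool" where
  "rg_module sm ac \<longleftrightarrow>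
     (\<forall>r x y. sm r (x + y) = sm r x + sm r y)
   \<and> (\<forall>r s x. sm (r + s) x = sm r x + sm s x)
   \<and> (\<forall>r s x. sm (r * s) x = sm r (sm s x))
   \<and> (\<forall>x. sm 1 x = x)
   \<and> (\<forall>g x y. ac g (x + y) = ac g x + ac g y)
   \<and> (\<forall>g r x. ac g (sm r x) = sm r (ac g x))
   \<and> (\<forall>x. ac 0 x = x)
   \<and> (\<forall>g h x. ac (g + h) x = ac g (ac h x))"

definition rspan :: "('r::ring_1 \<Rightarrow> 'm::ab_group_add \<Rightarrow> 'm) \<Rightarrow> 'm set \<Rightarrow> 'm set" where
  "rspan sm X = {v. \<exists>T c. finite T \<and> T \<subseteq> X \<and> v = (\<Sum>y\<in>T. sm (c y) y)}"

definition fin_gen_set ::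
  "('r::ring_1 \<Rightarrow> 'm::ab_group_add \<Rightarrow> 'm) \<Rightarrow> ('g::group_add \<Rightarrow> 'm \<Rightarrow> 'm) \<Rightarrow> 'm set \<Rightarrow> bool" where
  "fin_gen_set sm ac \<Sigma> \<longleftrightarrow> finite \<Sigma> \<and> rspan sm {ac g \<sigma> | g \<sigma>. \<sigma> \<in> \<Sigma>} = UNIV"

definition sfilt ::
  "('r::ring_1 \<Rightarrow> 'm::ab_group_add \<Rightarrow> 'm) \<Rightarrow> ('g::group_add \<Rightarrow> 'm \<Rightarrow> 'm) \<Rightarrow> 'm set \<Rightarrow> 'g set \<Rightarrow> 'm set" where
  "sfilt sm ac \<Sigma> S = rspan sm {ac s \<sigma> | s \<sigma>. s \<in> S \<and> \<sigma> \<in> \<Sigma>}"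

definition sum_fam :: "'i set \<Rightarrow> ('i \<Rightarrow> 'm::ab_group_add set) \<Rightarrow> 'm set" where
  "sum_fam S M = {v. \<exists>T f. finite T \<and> T \<subseteq> S \<and> (\<forall>x\<in>T. f x \<in> M x) \<and> v = (\<Sum>x\<in>T. f x)}"

definition lean :: "'g::group_add set \<Rightarrow> ('g set \<Rightarrow> 'm::ab_group_add set) \<Rightarrow> bool" where
  "lean A F \<longleftrightarrow> (\<exists>D. \<forall>S. F S \<subseteq> sum_fam S (\<lambda>x. F (ball_w A x D)))"

definition insular :: "'g::group_add set \<Rightarrow> ('g set \<Rightarrow> 'm::ab_group_add set) \<Rightarrow> bool" where
  "insular A F \<longleftrightarrow> (\<exists>d. \<forall>S U. F S \<inter> F U \<subseteq> F (enlarge A S d \<inter> enlarge A U d))"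

definition bdd_bicontrolled ::
  "'g::group_add set \<Rightarrow> ('m::ab_group_add \<Rightarrow> 'n::ab_group_add) \<Rightarrow> ('g set \<Rightarrow> 'm set) \<Rightarrow> ('g set \<Rightarrow> 'n set) \<Rightarrow> bool" where
  "bdd_bicontrolled A f F F' \<longleftrightarrow>
     (\<exists>b. \<forall>S. f ` F S \<subseteq> F' (enlarge A S b) \<and> range f \<inter> F' S \<subseteq> f ` F (enlarge A S b))"

definition rg_hom ::
  "('r::ring_1 \<Rightarrow> 'm::ab_group_add \<Rightarrow> 'm) \<Rightarrow> ('g::group_add \<Rightarrow> 'm \<Rightarrow> 'm) \<Rightarrow>
   ('r \<Rightarrow> 'n::ab_group_add \<Rightarrow> 'n) \<Rightarrow> ('g \<Rightarrow> 'n \<Rightarrow> 'n) \<Rightarrow> ('m \<Rightarrow> 'n) \<Rightarrow> bool" where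
  "rg_hom smF acF smG acG f \<longleftrightarrow>
     (\<forall>x y. f (x + y) = f x + f y) \<and> (\<forall>r x. f (smF r x) = smG r (f x))
   \<and> (\<forall>g x. f (acF g x) = acG g (f x))"

end

theory Submission
  imports Defs
begin

text \<open>For the filtration s(F,\<Sigma>), bounded control in both directions only has to be checked on
  the finitely many generators: every \<phi>(\<sigma>) with \<sigma> in \<Sigma>F is an R-combination of translates
  g\<tau> with \<tau> in \<Sigma>G and g in a fixed ball B(0,b), and every \<tau> in \<Sigma>G has a preimage in the
  corresponding part of F. Translating by s \<in> S and using R[\<Gamma>]-linearity of \<phi> moves these statements to
  the generators s\<sigma> and s\<tau> of F(S) and G(S), with the ball B(0,b) becoming S[b].\<close>

lemma additive_sum:
  fixes h :: "'m::ab_group_add \<Rightarrow> 'n::ab_group_add"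
  assumes "\<And>x y. h (x + y) = h x + h y"
  shows "h (sum f T) = (\<Sum>y\<in>T. h (f y))"
proof -
  have "h 0 = 0" using assms[of 0 0] by simp
  with assms show ?thesis using sum_comp_morphism[of h f T] by (simp add: comp_def)
qed

lemma rg_module_smult_zero: "rg_module sm ac \<Longrightarrow> sm 0 x = 0"
  unfolding rg_module_def by (metis add_0 add_cancel_left_left)

lemma rspan_intro: "finite T \<Longrightarrow> T \<subseteq> X \<Longrightarrow> (\<Sum>y\<in>T. sm (c y) y) \<in> rspan sm X"
  unfolding rspan_def by (intro CollectI exI[of _ T] exI[of _ c]) simp

lemma rspan_elim:
  assumes "v \<in> rspan sm X"
  obtains T c where "finite T" "T \<subseteq> X" "v = (\<Sum>y\<in>T. sm (c y) y)"
  using assms unfolding rspan_def by blast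

lemma rspan_mono: "X \<subseteq> Y \<Longrightarrow> rspan sm X \<subseteq> rspan sm Y"
  unfolding rspan_def by blast

lemma rspan_zero: "0 \<in> rspan sm X"
  using rspan_intro[of "{}" X sm] by simp

lemma rspan_base: "rg_module sm ac \<Longrightarrow> y \<in> X \<Longrightarrow> y \<in> rspan sm X"
  using rspan_intro[of "{y}" X sm "\<lambda>_. 1"] unfolding rg_module_def by simp

lemma rspan_add:
  assumes m: "rg_module sm ac" and "x \<in> rspan sm X" and "y \<in> rspan sm X"
  shows "x + y \<in> rspan sm X"
proof -
  obtain T1 c1 where 1: "finite T1" "T1 \<subseteq> X" "x = (\<Sum>y\<in>T1. sm (c1 y) y)"
    using \<open>x \<in> rspan sm X\<close> by (rule rspan_elim)
  obtain T2 c2 where 2: "finite T2" "T2 \<subseteq> X" "y = (\<Sum>y\<in>T2. sm (c2 y) y)"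
    using \<open>y \<in> rspan sm X\<close> by (rule rspan_elim)
  define d1 where "d1 z = (if z \<in> T1 then c1 z else 0)" for z
  define d2 where "d2 z = (if z \<in> T2 then c2 z else 0)" for z
  have x: "x = (\<Sum>z\<in>T1 \<union> T2. sm (d1 z) z)"
    unfolding 1(3) using 1(1) 2(1)
    by (intro sum.mono_neutral_cong_left) (auto simp: d1_def rg_module_smult_zero[OF m])
  have y: "y = (\<Sum>z\<in>T1 \<union> T2. sm (d2 z) z)"
    unfolding 2(3) using 1(1) 2(1)
    by (intro sum.mono_neutral_cong_left) (auto simp: d2_def rg_module_smult_zero[OF m])
  have "x + y = (\<Sum>z\<in>T1 \<union> T2. sm (d1 z + d2 z) z)"
    using m unfolding x y rg_module_def by (simp add: sum.distrib)
  also have "\<dots> \<in> rspan sm X"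
    using 1 2 by (intro rspan_intro) auto
  finally show ?thesis .
qed

lemma rspan_smult:
  assumes m: "rg_module sm ac" and "x \<in> rspan sm X"
  shows "sm r x \<in> rspan sm X"
proof -
  obtain T c where T: "finite T" "T \<subseteq> X" "x = (\<Sum>y\<in>T. sm (c y) y)"
    using \<open>x \<in> rspan sm X\<close> by (rule rspan_elim)
  have "sm r x = (\<Sum>y\<in>T. sm (r * c y) y)"
    using m unfolding T(3) rg_module_def by (simp add: additive_sum)
  also have "\<dots> \<in> rspan sm X"
    using T by (intro rspan_intro)
  finally show ?thesis .
qed

lemma rspan_sum:
  assumes "rg_module sm ac" and "\<And>i. i \<in> I \<Longrightarrow> f i \<in> rspan sm X"
  shows "sum f I \<in> rspan sm X"
  using assms(2)
proof (induction I rule: infinite_finite_induct)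
  case (insert i I)
  then show ?case using rspan_add[OF assms(1)] by simp
qed (simp_all add: rspan_zero)

lemma image_rspan_subset:
  assumes "rg_module sm2 ac2"
    and add: "\<And>x y. h (x + y) = h x + h y" and smult: "\<And>r x. h (sm1 r x) = sm2 r (h x)"
    and "h ` X \<subseteq> rspan sm2 Y"
  shows "h ` rspan sm1 X \<subseteq> rspan sm2 Y"
proof
  fix v assume "v \<in> h ` rspan sm1 X"
  then obtain x T c where T: "v = h x" "finite T" "T \<subseteq> X" "x = (\<Sum>y\<in>T. sm1 (c y) y)"
    by (blast elim: rspan_elim)
  have "v = (\<Sum>y\<in>T. sm2 (c y) (h y))"
    unfolding T(1,4) additive_sum[of h, OF add] smult ..
  also have "\<dots> \<in> rspan sm2 Y"
    using T(3) assms(1,4) by (intro rspan_sum rspan_smult) auto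
  finally show "v \<in> rspan sm2 Y" .
qed

lemma rspan_subset_image:
  assumes "rg_module sm1 ac1"
    and add: "\<And>x y. h (x + y) = h x + h y" and smult: "\<And>r x. h (sm1 r x) = sm2 r (h x)"
    and "X \<subseteq> h ` rspan sm1 W"
  shows "rspan sm2 X \<subseteq> h ` rspan sm1 W"
proof
  fix v assume "v \<in> rspan sm2 X"
  then obtain T c where T: "finite T" "T \<subseteq> X" "v = (\<Sum>y\<in>T. sm2 (c y) y)"
    by (rule rspan_elim)
  have "\<forall>y\<in>X. \<exists>w\<in>rspan sm1 W. h w = y"
    using assms(4) by blast
  then obtain z where z: "\<And>y. y \<in> X \<Longrightarrow> z y \<in> rspan sm1 W \<and> h (z y) = y"
    by metis
  have "v = h (\<Sum>y\<in>T. sm1 (c y) (z y))"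
    unfolding T(3) additive_sum[of h, OF add] smult using z T(2) by (intro sum.cong) auto
  moreover have "(\<Sum>y\<in>T. sm1 (c y) (z y)) \<in> rspan sm1 W"
    using T(2) z assms(1) by (intro rspan_sum rspan_smult) auto
  ultimately show "v \<in> h ` rspan sm1 W" by blast
qed

lemma enlarge_mono: "b \<le> b' \<Longrightarrow> enlarge A S b \<subseteq> enlarge A S b'"
  unfolding enlarge_def by (auto intro: order_trans)

lemma sfilt_mono: "S \<subseteq> S' \<Longrightarrow> sfilt sm ac \<Sigma> S \<subseteq> sfilt sm ac \<Sigma> S'"
  unfolding sfilt_def by (intro rspan_mono) auto

lemma sfilt_ball_mono: "b \<le> b' \<Longrightarrow> sfilt sm ac \<Sigma> (ball_w A x b) \<subseteq> sfilt sm ac \<Sigma> (ball_w A x b')"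
  unfolding ball_w_def by (rule sfilt_mono) auto

lemma sfilt_translate:
  fixes A :: "'g::group_add set"
  assumes m: "rg_module sm ac" and "s \<in> S"
  shows "ac s ` sfilt sm ac \<Sigma> (ball_w A 0 b) \<subseteq> sfilt sm ac \<Sigma> (enlarge A S b)"
  unfolding sfilt_def
proof (rule image_rspan_subset[OF m])
  show "ac s (x + y) = ac s x + ac s y" "ac s (sm r x) = sm r (ac s x)" for x y r
    using m unfolding rg_module_def by blast+
  show "ac s ` {ac g \<sigma> |g \<sigma>. g \<in> ball_w A 0 b \<and> \<sigma> \<in> \<Sigma>}
          \<subseteq> rspan sm {ac g \<sigma> |g \<sigma>. g \<in> enlarge A S b \<and> \<sigma> \<in> \<Sigma>}"
  proof clarify
    fix g \<sigma> assume g: "g \<in> ball_w A 0 b" and "\<sigma> \<in> \<Sigma>"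
    have "ac s (ac g \<sigma>) = ac (s + g) \<sigma>"
      using m unfolding rg_module_def by metis
    moreover have "word_dist A s (s + g) \<le> b"
      using g unfolding ball_w_def word_dist_def by (simp add: add.assoc[symmetric])
    then have "s + g \<in> enlarge A S b"
      using \<open>s \<in> S\<close> unfolding enlarge_def by blast
    ultimately show "ac s (ac g \<sigma>) \<in> rspan sm {ac g \<sigma> |g \<sigma>. g \<in> enlarge A S b \<and> \<sigma> \<in> \<Sigma>}"
      using \<open>\<sigma> \<in> \<Sigma>\<close> by (intro rspan_base[OF m]) blast
  qed
qed

lemma fin_gen_set_in_sfilt_ball:
  fixes A :: "'g::group_add set"
  assumes "fin_gen_set sm ac \<Sigma>"
  shows "\<exists>b. x \<in> sfilt sm ac \<Sigma> (ball_w A 0 b)"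
proof -
  have "x \<in> rspan sm {ac g \<sigma> | g \<sigma>. \<sigma> \<in> \<Sigma>}"
    using assms unfolding fin_gen_set_def by auto
  then obtain T c where T: "finite T" "T \<subseteq> {ac g \<sigma> | g \<sigma>. \<sigma> \<in> \<Sigma>}" "x = (\<Sum>y\<in>T. sm (c y) y)"
    by (rule rspan_elim)
  have "\<forall>y\<in>T. \<exists>g. \<exists>\<sigma>\<in>\<Sigma>. y = ac g \<sigma>"
    using T(2) by blast
  then obtain g where g: "\<And>y. y \<in> T \<Longrightarrow> \<exists>\<sigma>\<in>\<Sigma>. y = ac (g y) \<sigma>"
    by metis
  \<comment> \<open>No hypothesis on A is needed: balls are defined through word_length itself.\<close>
  define b where "b = (\<Sum>y\<in>T. word_length A (g y))"
  have "\<And>y. y \<in> T \<Longrightarrow> word_length A (g y) \<le> b"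
    unfolding b_def using T(1) by (intro member_le_sum) auto
  then have "T \<subseteq> {ac g \<sigma> | g \<sigma>. g \<in> ball_w A 0 b \<and> \<sigma> \<in> \<Sigma>}"
    using g unfolding ball_w_def word_dist_def by fastforce
  then show ?thesis
    unfolding sfilt_def T(3) using T(1) by (blast intro: rspan_intro)
qed

lemma finite_subset_sfilt_ball:
  fixes A :: "'g::group_add set"
  assumes "fin_gen_set sm ac \<Sigma>" and "finite X"
  shows "\<exists>b. X \<subseteq> sfilt sm ac \<Sigma> (ball_w A 0 b)"
  using assms(2)
proof (induction X rule: finite_induct)
  case (insert x X)
  then obtain b where b: "X \<subseteq> sfilt sm ac \<Sigma> (ball_w A 0 b)" by blast
  obtain b' where b': "x \<in> sfilt sm ac \<Sigma> (ball_w A 0 b')"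
    using fin_gen_set_in_sfilt_ball[OF assms(1)] by blast
  have "insert x X \<subseteq> sfilt sm ac \<Sigma> (ball_w A 0 (max b b'))"
    using b b' sfilt_ball_mono[of b "max b b'" sm ac \<Sigma> A 0]
      sfilt_ball_mono[of b' "max b b'" sm ac \<Sigma> A 0] by auto
  then show ?case ..
qed simp

lemma rg_hom_image_sfilt:
  fixes A :: "'g::group_add set"
  assumes mG: "rg_module smG acG" and \<phi>: "rg_hom smF acF smG acG \<phi>"
    and gens: "\<phi> ` \<Sigma>F \<subseteq> sfilt smG acG \<Sigma>G (ball_w A 0 b)"
  shows "\<phi> ` sfilt smF acF \<Sigma>F S \<subseteq> sfilt smG acG \<Sigma>G (enlarge A S b)"
  unfolding sfilt_def
proof (rule image_rspan_subset[OF mG])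
  show "\<phi> (x + y) = \<phi> x + \<phi> y" "\<phi> (smF r x) = smG r (\<phi> x)" for x y r
    using \<phi> unfolding rg_hom_def by blast+
  show "\<phi> ` {acF s \<sigma> |s \<sigma>. s \<in> S \<and> \<sigma> \<in> \<Sigma>F}
          \<subseteq> rspan smG {acG s \<tau> |s \<tau>. s \<in> enlarge A S b \<and> \<tau> \<in> \<Sigma>G}"
  proof clarify
    fix s \<sigma> assume "s \<in> S" "\<sigma> \<in> \<Sigma>F"
    then have "acG s (\<phi> \<sigma>) \<in> sfilt smG acG \<Sigma>G (enlarge A S b)"
      using sfilt_translate[OF mG \<open>s \<in> S\<close>] gens by blast
    then show "\<phi> (acF s \<sigma>) \<in> rspan smG {acG s \<tau> |s \<tau>. s \<in> enlarge A S b \<and> \<tau> \<in> \<Sigma>G}"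
      using \<phi> unfolding rg_hom_def sfilt_def by simp
  qed
qed

lemma sfilt_subset_rg_hom_image:
  fixes A :: "'g::group_add set"
  assumes mF: "rg_module smF acF" and \<phi>: "rg_hom smF acF smG acG \<phi>"
    and gens: "\<Sigma>G \<subseteq> \<phi> ` sfilt smF acF \<Sigma>F (ball_w A 0 b)"
  shows "sfilt smG acG \<Sigma>G S \<subseteq> \<phi> ` sfilt smF acF \<Sigma>F (enlarge A S b)"
  unfolding sfilt_def
proof (rule rspan_subset_image[OF mF])
  show "\<phi> (x + y) = \<phi> x + \<phi> y" "\<phi> (smF r x) = smG r (\<phi> x)" for x y r
    using \<phi> unfolding rg_hom_def by blast+
  show "{acG s \<tau> |s \<tau>. s \<in> S \<and> \<tau> \<in> \<Sigma>G}
          \<subseteq> \<phi> ` rspan smF {acF s \<sigma> |s \<sigma>. s \<in> enlarge A S b \<and> \<sigma> \<in> \<Sigma>F}"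
  proof clarify
    fix s \<tau> assume "s \<in> S" "\<tau> \<in> \<Sigma>G"
    then obtain x where x: "\<tau> = \<phi> x" "x \<in> sfilt smF acF \<Sigma>F (ball_w A 0 b)"
      using gens by (blast elim: imageE)
    have "acG s \<tau> = \<phi> (acF s x)"
      using \<phi> x(1) unfolding rg_hom_def by simp
    moreover have "acF s x \<in> sfilt smF acF \<Sigma>F (enlarge A S b)"
      using sfilt_translate[OF mF \<open>s \<in> S\<close>] x(2) by (rule subsetD[OF _ imageI])
    ultimately show "acG s \<tau> \<in> \<phi> ` rspan smF {acF s \<sigma> |s \<sigma>. s \<in> enlarge A S b \<and> \<sigma> \<in> \<Sigma>F}"
      unfolding sfilt_def by (rule image_eqI)
  qed
qed

theorem lemma3p5:
  fixes A :: "'g::group_add set"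
    and smF :: "'r::ring_1 \<Rightarrow> 'm::ab_group_add \<Rightarrow> 'm" and acF :: "'g \<Rightarrow> 'm \<Rightarrow> 'm"
    and smG :: "'r \<Rightarrow> 'n::ab_group_add \<Rightarrow> 'n" and acG :: "'g \<Rightarrow> 'n \<Rightarrow> 'n"
    and \<Sigma>F :: "'m set" and \<Sigma>G :: "'n set" and \<phi> :: "'m \<Rightarrow> 'n"
  assumes "noetherian_ring TYPE('r)"
    and "finite A" and "generates A"
    and "rg_module smF acF" and "rg_module smG acG"
    and "fin_gen_set smF acF \<Sigma>F" and "lean A (sfilt smF acF \<Sigma>F)" and "insular A (sfilt smF acF \<Sigma>F)"
    and "fin_gen_set smG acG \<Sigma>G" and "lean A (sfilt smG acG \<Sigma>G)" and "insular A (sfilt smG acG \<Sigma>G)"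
    and "rg_hom smF acF smG acG \<phi>" and "surj \<phi>"
  shows "bdd_bicontrolled A \<phi> (sfilt smF acF \<Sigma>F) (sfilt smG acG \<Sigma>G)"
proof -
  have "finite (\<phi> ` \<Sigma>F)" "finite (inv \<phi> ` \<Sigma>G)"
    using assms(6,9) unfolding fin_gen_set_def by simp_all
  then obtain b1 b2 where
    b1: "\<phi> ` \<Sigma>F \<subseteq> sfilt smG acG \<Sigma>G (ball_w A 0 b1)" and
    b2: "inv \<phi> ` \<Sigma>G \<subseteq> sfilt smF acF \<Sigma>F (ball_w A 0 b2)"
    using finite_subset_sfilt_ball[OF assms(9)] finite_subset_sfilt_ball[OF assms(6)] by meson
  have lifts: "\<Sigma>G \<subseteq> \<phi> ` sfilt smF acF \<Sigma>F (ball_w A 0 b2)"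
  proof
    fix \<tau> assume "\<tau> \<in> \<Sigma>G"
    then have "inv \<phi> \<tau> \<in> sfilt smF acF \<Sigma>F (ball_w A 0 b2)"
      using b2 by blast
    then show "\<tau> \<in> \<phi> ` sfilt smF acF \<Sigma>F (ball_w A 0 b2)"
      by (rule image_eqI[rotated]) (simp add: surj_f_inv_f[OF \<open>surj \<phi>\<close>])
  qed
  define b where "b = max b1 b2"
  have "\<phi> ` sfilt smF acF \<Sigma>F S \<subseteq> sfilt smG acG \<Sigma>G (enlarge A S b)" for S
    by (rule order_trans[OF rg_hom_image_sfilt[OF assms(5,12) b1] sfilt_mono[OF enlarge_mono]])
      (simp add: b_def)
  moreover have "range \<phi> \<inter> sfilt smG acG \<Sigma>G S \<subseteq> \<phi> ` sfilt smF acF \<Sigma>F (enlarge A S b)" for S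
    by (rule order_trans[OF Int_lower2 order_trans[OF sfilt_subset_rg_hom_image[OF assms(4,12) lifts]
          image_mono[OF sfilt_mono[OF enlarge_mono]]]])
      (simp add: b_def)
  ultimately show ?thesis
    unfolding bdd_bicontrolled_def by blast
qed

end
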